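(* Let $G$ be an interval graph and consider an instance of \textsc{Requirement Induced Disjoint Paths} on $G$. Suppose some vertex $u$ of $G$ represents three terminals belonging to three different terminal pairs, and for each of these three terminals, the vertex representing its partner (the other terminal of its pair) is at distance at least $2$ from $u$ in $G$. Then the instance is a no-instance.
   Context: All graphs are finite, undirected, without loops or multiple edges. For a path $P=v_1\cdots v_r$, the vertices $v_1,v_r$ are its ends and $v_2,\ldots,v_{r-1}$ its inner vertices. An edge $v_iv_j$ with $i+1<j$ is an inner chord of $P$ if $v_i$ or $v_j$ is an inner vertex of $P$. Distinct paths $P_1,\ldots,P_\ell$ are mutually induced if (i) no $P_i$ has an inner chord; (ii) two distinct paths $P_i,P_j$ share only vertices that are ends of both paths; (iii) no inner vertex $u$ of some $P_i$ is adjacent to a vertex $v$ of some $P_j$ with $j\neq i$, unless $v$ is an end of both $P_i$ and $P_j$. \textsc{Requirement Induced Disjoint Paths}: the input is a graph $G$, $k$ terminal pairs $(s_1,t_1),\ldots,(s_k,t_k)$ and positive integers $r_1,\ldots,r_k$. Each terminal is placed on ("represented by") a vertex of $G$; several terminals may be represented by the same vertex, but $s_i$ and $t_i$ are represented by distinct vertices, and the unordered pairs of representing vertices are pairwise distinct for different $i$. The terminals $s_i$ and $t_i$ are called partners. The question is whether $G$ has $\ell=r_1+\cdots+r_k$ mutually induced paths such that, for each $i$, exactly $r_i$ of them join the vertex representing $s_i$ and the vertex representing $t_i$. An interval graph is a graph whose vertices can be assigned intervals of the real line so that two vertices are adjacent iff their intervals intersect. *)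

theory Defs
  imports Complex_Main
begin

definition graph :: "'a set \<Rightarrow> ('a \<Rightarrow> 'a \<Rightarrow> bool) \<Rightarrow> bool" where
  "graph V E \<longleftrightarrow> finite V \<and> (\<forall>u v. E u v \<longrightarrow> u \<in> V \<and> v \<in> V \<and> u \<noteq> v \<and> E v u)"

definition interval_graph :: "'a set \<Rightarrow> ('a \<Rightarrow> 'a \<Rightarrow> bool) \<Rightarrow> bool" where
  "interval_graph V E \<longleftrightarrow> graph V E \<and>
     (\<exists>l r :: 'a \<Rightarrow> real. (\<forall>v\<in>V. l v \<le> r v) \<and>
        (\<forall>u\<in>V. \<forall>v\<in>V. u \<noteq> v \<longrightarrow> (E u v \<longleftrightarrow> l u \<le> r v \<and> l v \<le> r u)))"

definition is_path :: "'a set \<Rightarrow> ('a \<Rightarrow> 'a \<Rightarrow> bool) \<Rightarrow> 'a list \<Rightarrow> bool" where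
  "is_path V E P \<longleftrightarrow> P \<noteq> [] \<and> distinct P \<and> set P \<subseteq> V \<and>
     (\<forall>i. Suc i < length P \<longrightarrow> E (P ! i) (P ! Suc i))"

definition ends :: "'a list \<Rightarrow> 'a set" where
  "ends P = {hd P, last P}"

definition inner :: "'a list \<Rightarrow> 'a set" where
  "inner P = {P ! i | i. 0 < i \<and> Suc i < length P}"

definition no_inner_chord :: "('a \<Rightarrow> 'a \<Rightarrow> bool) \<Rightarrow> 'a list \<Rightarrow> bool" where
  "no_inner_chord E P \<longleftrightarrow>
     (\<forall>i j. i + 1 < j \<and> j < length P \<and> (P ! i \<in> inner P \<or> P ! j \<in> inner P)
        \<longrightarrow> \<not> E (P ! i) (P ! j))"

text \<open>Paths as subgraphs: a path and its reversal are the same path.\<close>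
definition same_path :: "'a list \<Rightarrow> 'a list \<Rightarrow> bool" where
  "same_path P Q \<longleftrightarrow> P = Q \<or> P = rev Q"

definition mutually_induced :: "'a set \<Rightarrow> ('a \<Rightarrow> 'a \<Rightarrow> bool) \<Rightarrow> 'a list list \<Rightarrow> bool" where
  "mutually_induced V E Ps \<longleftrightarrow>
     (\<forall>P \<in> set Ps. is_path V E P \<and> no_inner_chord E P) \<and>
     (\<forall>i j. i < length Ps \<and> j < length Ps \<and> i \<noteq> j \<longrightarrow>
        \<not> same_path (Ps ! i) (Ps ! j) \<and>
        (\<forall>v \<in> set (Ps ! i) \<inter> set (Ps ! j). v \<in> ends (Ps ! i) \<and> v \<in> ends (Ps ! j)) \<and>
        (\<forall>u \<in> inner (Ps ! i). \<forall>v \<in> set (Ps ! j).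
            E u v \<longrightarrow> v \<in> ends (Ps ! i) \<and> v \<in> ends (Ps ! j)))"

definition RIDP_instance ::
  "'a set \<Rightarrow> ('a \<Rightarrow> 'a \<Rightarrow> bool) \<Rightarrow> nat \<Rightarrow> (nat \<Rightarrow> 'a) \<Rightarrow> (nat \<Rightarrow> 'a) \<Rightarrow> (nat \<Rightarrow> nat) \<Rightarrow> bool" where
  "RIDP_instance V E k s t r \<longleftrightarrow> graph V E \<and>
     (\<forall>i<k. s i \<in> V \<and> t i \<in> V \<and> s i \<noteq> t i \<and> 0 < r i) \<and>
     (\<forall>i<k. \<forall>j<k. i \<noteq> j \<longrightarrow> {s i, t i} \<noteq> {s j, t j})"

definition RIDP_yes ::
  "'a set \<Rightarrow> ('a \<Rightarrow> 'a \<Rightarrow> bool) \<Rightarrow> nat \<Rightarrow> (nat \<Rightarrow> 'a) \<Rightarrow> (nat \<Rightarrow> 'a) \<Rightarrow> (nat \<Rightarrow> nat) \<Rightarrow> bool" where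
  "RIDP_yes V E k s t r \<longleftrightarrow>
     (\<exists>Ps. length Ps = (\<Sum>i<k. r i) \<and> mutually_induced V E Ps \<and>
        (\<forall>i<k. length (filter (\<lambda>P. ends P = {s i, t i}) Ps) = r i))"

end

theory Submission
  imports Defs
begin

(*
  Suppose the instance had a solution.  For each of the three pairs, pick
  a solution path joining u to the partner w_i, oriented so that it starts at u.  Since
  w_i is not adjacent to u, the path has at least three vertices and its second vertex
  x_i is an inner vertex adjacent to u.  Mutual inducedness makes x_1, x_2, x_3 pairwise
  distinct and non-adjacent, so their intervals are pairwise disjoint and one of them,
  say x_b, lies strictly between the other two, x_a and x_c.  The path from u through
  x_b to w_b starts left of x_c and ends strictly right of u, hence right of the left
  end of x_c (u meets x_c); by a discrete intermediate value argument some inner vertex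
  of that path meets x_c (or, symmetrically, x_a), contradicting mutual inducedness.
*)

section \<open>Paths and mutually induced families\<close>

definition path_between :: "'a set \<Rightarrow> ('a \<Rightarrow> 'a \<Rightarrow> bool) \<Rightarrow> 'a \<Rightarrow> 'a \<Rightarrow> 'a list \<Rightarrow> bool" where
  "path_between V E u w Q \<longleftrightarrow> is_path V E Q \<and> hd Q = u \<and> last Q = w"

text \<open>The interaction forbidden by mutual inducedness between two different paths:
  inner vertices of \<open>P\<close> neither coincide with nor are adjacent to non-end vertices
  of \<open>P'\<close>.\<close>
definition separated :: "('a \<Rightarrow> 'a \<Rightarrow> bool) \<Rightarrow> 'a list \<Rightarrow> 'a list \<Rightarrow> bool" where
  "separated E P P' \<longleftrightarrow> (\<forall>y\<in>inner P. \<forall>v\<in>set P' - ends P'. y \<noteq> v \<and> \<not> E y v)"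

lemma inner_subset_set: "inner P \<subseteq> set P"
  unfolding inner_def by auto

lemma mutually_induced_separated:
  assumes mi: "mutually_induced V E Ps"
    and ij: "i < length Ps" "j < length Ps" "i \<noteq> j"
  shows "separated E (Ps ! i) (Ps ! j)"
  unfolding separated_def
proof (intro ballI)
  fix y v assume y: "y \<in> inner (Ps ! i)" and v: "v \<in> set (Ps ! j) - ends (Ps ! j)"
  have shared: "\<forall>x \<in> set (Ps ! i) \<inter> set (Ps ! j). x \<in> ends (Ps ! j)"
    and adjacent: "\<forall>x \<in> inner (Ps ! i). \<forall>z \<in> set (Ps ! j). E x z \<longrightarrow> z \<in> ends (Ps ! j)"
    using mi ij unfolding mutually_induced_def by blast+
  have "y \<in> set (Ps ! i)" using y inner_subset_set[of "Ps ! i"] by (rule subsetD[rotated])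
  then show "y \<noteq> v \<and> \<not> E y v" using shared adjacent y v by blast
qed

lemma inner_rev: "inner (rev P) = inner P"
proof -
  have "inner (rev Q) \<subseteq> inner Q" for Q :: "'b list"
  proof
    fix x assume "x \<in> inner (rev Q)"
    then obtain i where i: "0 < i" "Suc i < length Q" "x = rev Q ! i" unfolding inner_def by auto
    then have "x = Q ! (length Q - Suc i)" by (simp add: rev_nth)
    moreover have "0 < length Q - Suc i" "Suc (length Q - Suc i) < length Q" using i by auto
    ultimately show "x \<in> inner Q" unfolding inner_def by blast
  qed
  from this[of P] this[of "rev P"] show ?thesis by auto
qed

lemma ends_rev: "P \<noteq> [] \<Longrightarrow> ends (rev P) = ends P"
  unfolding ends_def by (auto simp: hd_rev last_rev)

lemma separated_rev:
  assumes "P \<noteq> []" "P' \<noteq> []"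
  shows "separated E (rev P) P' \<longleftrightarrow> separated E P P'"
    and "separated E P (rev P') \<longleftrightarrow> separated E P P'"
  using assms by (simp_all add: separated_def inner_rev ends_rev)

lemma is_path_rev:
  assumes g: "graph V E" and p: "is_path V E P"
  shows "is_path V E (rev P)"
  unfolding is_path_def
proof (intro conjI allI impI)
  show "rev P \<noteq> []" "distinct (rev P)" "set (rev P) \<subseteq> V" using p unfolding is_path_def by auto
  fix i assume i: "Suc i < length (rev P)"
  define n where "n = length P"
  have "E (P ! (n - Suc (Suc i))) (P ! Suc (n - Suc (Suc i)))"
    using p i unfolding is_path_def n_def by auto
  moreover have "Suc (n - Suc (Suc i)) = n - Suc i" using i n_def by auto
  ultimately have "E (P ! (n - Suc i)) (P ! (n - Suc (Suc i)))" using g unfolding graph_def by metis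
  then show "E (rev P ! i) (rev P ! Suc i)" using i n_def by (simp add: rev_nth)
qed

definition orient :: "'a \<Rightarrow> 'a list \<Rightarrow> 'a list" where
  "orient u P = (if hd P = u then P else rev P)"

lemma path_between_orient:
  assumes g: "graph V E" and p: "is_path V E P" and e: "ends P = {u, w}"
  shows "path_between V E u w (orient u P)"
proof -
  have ne: "P \<noteq> []" using p unfolding is_path_def by auto
  have "{hd P, last P} = {u, w}" using e unfolding ends_def .
  then show ?thesis
    using is_path_rev[OF g p] p ne
    by (auto simp: path_between_def orient_def hd_rev last_rev doubleton_eq_iff)
qed

lemma separated_orient:
  assumes "P \<noteq> []" "P' \<noteq> []"
  shows "separated E (orient u P) (orient u' P') \<longleftrightarrow> separated E P P'"
  using separated_rev[OF assms] separated_rev[of "rev P" "P'"] assms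
  by (simp add: orient_def)

lemma member_path_between:
  assumes g: "graph V E" and mi: "mutually_induced V E Ps"
    and "i < length Ps" "ends (Ps ! i) = {u, w}"
  shows "path_between V E u w (orient u (Ps ! i))"
proof (rule path_between_orient[OF g _ assms(4)])
  show "is_path V E (Ps ! i)" using mi assms(3) unfolding mutually_induced_def by simp
qed

lemma members_separated:
  assumes mi: "mutually_induced V E Ps" and ij: "i < length Ps" "j < length Ps" "i \<noteq> j"
  shows "separated E (orient u (Ps ! i)) (orient u' (Ps ! j))"
proof -
  have "Ps ! i \<noteq> []" "Ps ! j \<noteq> []"
    using mi ij(1,2) unfolding mutually_induced_def is_path_def by auto
  then show ?thesis using mutually_induced_separated[OF mi ij] by (simp add: separated_orient)
qed

lemma second_vertex:
  assumes Q: "path_between V E u w Q" and uw: "u \<noteq> w" "\<not> E u w"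
  shows "3 \<le> length Q" "Q ! 1 \<in> inner Q" "Q ! 1 \<in> set Q - ends Q" "E u (Q ! 1)"
proof -
  have p: "is_path V E Q" "hd Q = u" "last Q = w" using Q unfolding path_between_def by auto
  have ne: "Q \<noteq> []" and d: "distinct Q" using p(1) unfolding is_path_def by auto
  have step: "E (Q ! 0) (Q ! Suc 0)" if "2 \<le> length Q" using p(1) that unfolding is_path_def by auto
  have "length Q \<noteq> 1" using p uw by (auto simp: length_Suc_conv)
  moreover have "length Q \<noteq> 2"
  proof
    assume l2: "length Q = 2"
    then have "Q = [Q ! 0, Q ! 1]"
      by (metis One_nat_def Suc_1 diff_Suc_1 length_0_conv length_Suc_conv nth_Cons_0 nth_Cons_Suc)
    then show False using step l2 p uw by (metis One_nat_def last_ConsL last_ConsR list.sel(1)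
          list.simps(3) order.refl)
  qed
  ultimately show len: "3 \<le> length Q" using ne by (cases "length Q") auto
  show "Q ! 1 \<in> inner Q" unfolding inner_def using len by (intro CollectI exI[of _ 1]) auto
  have "Q ! 1 \<noteq> Q ! 0" using nth_eq_iff_index_eq[OF d, of 1 0] len ne by simp
  moreover have "Q ! 1 \<noteq> Q ! (length Q - 1)" using len by (simp add: nth_eq_iff_index_eq[OF d])
  ultimately show "Q ! 1 \<in> set Q - ends Q"
    using len ne by (simp add: ends_def hd_conv_nth last_conv_nth)
  show "E u (Q ! 1)" using step len p(2) ne by (simp add: hd_conv_nth)
qed

section \<open>Interval models\<close>

text \<open>A discrete intermediate value theorem: in a chain of consecutively overlapping
  intervals \<open>[f j, g j]\<close> whose first member lies left of \<open>p\<close> and whose last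
  member reaches \<open>p\<close>, some later member contains \<open>p\<close>.\<close>
lemma interval_chain_crosses:
  fixes f g :: "nat \<Rightarrow> real"
  assumes "a \<le> m" "g a < p" "p \<le> g m"
    and overlap: "\<And>j. a \<le> j \<Longrightarrow> j < m \<Longrightarrow> f (Suc j) \<le> g j"
  shows "\<exists>j. a < j \<and> j \<le> m \<and> f j \<le> p \<and> p \<le> g j"
  using assms
proof (induction m)
  case 0
  then show ?case by simp
next
  case (Suc m)
  then have am: "a \<le> m" by (auto simp: le_Suc_eq)
  show ?case
  proof (cases "p \<le> g m")
    case True
    then show ?thesis using Suc am by (metis le_SucI less_Suc_eq)
  next
    case False
    then show ?thesis using am Suc.prems(3) Suc.prems(4)[of m] by (intro exI[of _ "Suc m"]) auto
  qed
qed

locale interval_model =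
  fixes V :: "'a set" and E :: "'a \<Rightarrow> 'a \<Rightarrow> bool" and l r :: "'a \<Rightarrow> real"
  assumes graph: "graph V E"
    and proper: "\<And>v. v \<in> V \<Longrightarrow> l v \<le> r v"
    and adjacent_iff: "\<And>x y. x \<in> V \<Longrightarrow> y \<in> V \<Longrightarrow> x \<noteq> y \<Longrightarrow> E x y \<longleftrightarrow> l x \<le> r y \<and> l y \<le> r x"

lemma interval_graph_model:
  assumes "interval_graph V E"
  obtains l r where "interval_model V E l r"
  using assms unfolding interval_graph_def interval_model_def by metis

context interval_model
begin

lemma edge_vertices: "E x y \<Longrightarrow> x \<in> V \<and> y \<in> V \<and> x \<noteq> y"
  using graph unfolding graph_def by blast

text \<open>Reflecting the real line gives another interval model; this symmetry lets every
  left/right argument be done once.\<close>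
lemma mirror: "interval_model V E (\<lambda>v. - r v) (\<lambda>v. - l v)"
  using graph proper adjacent_iff by unfold_locales auto

lemma nonadjacent_disjoint:
  assumes "x \<in> V" "y \<in> V" "x \<noteq> y" "\<not> E x y"
  shows "r x < l y \<or> r y < l x"
  using adjacent_iff[OF assms(1-3)] assms(4) by auto

lemma common_point_adjacent:
  assumes "x \<in> V" "y \<in> V" "l x \<le> p" "p \<le> r x" "l y \<le> p" "p \<le> r y"
  shows "x = y \<or> E x y"
  using adjacent_iff[OF assms(1,2)] assms(3-) by auto

lemma path_meets_right_neighbour:
  assumes Q: "path_between V E u w Q" and len: "2 \<le> length Q" and uw: "r u < l w"
    and c: "E u c" and second: "r (Q ! 1) < l c"
  shows "\<exists>y\<in>inner Q. y = c \<or> E y c"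
proof -
  define m where "m = length Q - 1"
  have p: "is_path V E Q" "hd Q = u" "last Q = w" using Q unfolding path_between_def by auto
  have QV: "Q ! j \<in> V" if "j \<le> m" for j
    using p(1) that len unfolding is_path_def m_def by (auto intro: nth_mem)
  have last: "Q ! m = w" using p(3) len last_conv_nth[of Q] unfolding m_def by force
  have uc: "l c \<le> r u" "c \<in> V" using c adjacent_iff edge_vertices by blast+
  have overlap: "l (Q ! Suc j) \<le> r (Q ! j)" if "j < m" for j
  proof -
    have "E (Q ! j) (Q ! Suc j)" using p(1) that unfolding is_path_def m_def by auto
    then show ?thesis using adjacent_iff edge_vertices by blast
  qed
  have "r u < r w" using uw proper[of w] QV[of m] last by auto
  then obtain j where j: "1 < j" "j \<le> m" "l (Q ! j) \<le> l c" "l c \<le> r (Q ! j)"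
    using interval_chain_crosses[of 1 m "\<lambda>j. r (Q ! j)" "l c" "\<lambda>j. l (Q ! j)"]
      second overlap last uc len unfolding m_def by fastforce
  have "j \<noteq> m" using j(3) last uw uc by auto
  then have "Q ! j \<in> inner Q" using j unfolding inner_def m_def by auto
  moreover have "Q ! j = c \<or> E (Q ! j) c"
    using common_point_adjacent[OF QV[OF j(2)] uc(2)] j proper[OF uc(2)] by auto
  ultimately show ?thesis by blast
qed

lemma path_meets_neighbour:
  assumes Q: "path_between V E u w Q" and uw: "u \<noteq> w" "\<not> E u w"
    and a: "E u a" "r a < l (Q ! 1)" and c: "E u c" "r (Q ! 1) < l c"
  shows "\<exists>y\<in>inner Q. y = a \<or> E y a \<or> y = c \<or> E y c"
proof -
  interpret mirrored: interval_model V E "\<lambda>v. - r v" "\<lambda>v. - l v" by (rule mirror)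
  have len: "2 \<le> length Q" using second_vertex(1)[OF Q uw] by simp
  have "u \<in> V" using a edge_vertices by blast
  moreover have "w \<in> V" using Q unfolding path_between_def is_path_def by auto
  ultimately have "r u < l w \<or> r w < l u" using nonadjacent_disjoint uw by blast
  then show ?thesis
  proof
    assume "r u < l w"
    then show ?thesis using path_meets_right_neighbour[OF Q len _ c] by blast
  next
    assume "r w < l u"
    then show ?thesis using mirrored.path_meets_right_neighbour[OF Q len _ a(1)] a(2) by auto
  qed
qed

lemma no_three_separated_paths:
  fixes Q :: "'i \<Rightarrow> 'a list" and w :: "'i \<Rightarrow> 'a"
  assumes paths: "\<And>i. i \<in> {i1, i2, i3} \<Longrightarrow> path_between V E u (w i) (Q i) \<and> u \<noteq> w i \<and> \<not> E u (w i)"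
    and sep: "\<And>i j. i \<in> {i1, i2, i3} \<Longrightarrow> j \<in> {i1, i2, i3} \<Longrightarrow> i \<noteq> j \<Longrightarrow> separated E (Q i) (Q j)"
    and distinct: "i1 \<noteq> i2" "i1 \<noteq> i3" "i2 \<noteq> i3"
  shows False
proof -
  define x where "x i = Q i ! 1" for i
  have second: "x i \<in> inner (Q i)" "x i \<in> set (Q i) - ends (Q i)" "E u (x i)"
    if "i \<in> {i1, i2, i3}" for i
    using second_vertex(2-4)[of V E u "w i" "Q i"] paths[OF that] unfolding x_def by blast+
  have xV: "x i \<in> V" if "i \<in> {i1, i2, i3}" for i
    using second(3)[OF that] edge_vertices by blast
  define before where "before i j \<longleftrightarrow> r (x i) < l (x j)" for i j
  have disjoint: "before i j \<or> before j i"
    if "i \<in> {i1, i2, i3}" "j \<in> {i1, i2, i3}" "i \<noteq> j" for i j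
    using nonadjacent_disjoint[OF xV[OF that(1)] xV[OF that(2)]] sep[OF that]
      second(1)[OF that(1)] second(2)[OF that(2)]
    unfolding separated_def before_def by blast
  text \<open>No interval \<open>x m\<close> lies strictly between two others \<open>x a\<close> and \<open>x c\<close> \<dots>\<close>
  have no_middle: "\<not> (before a m \<and> before m c)"
    if mac: "m \<in> {i1, i2, i3}" "a \<in> {i1, i2, i3}" "c \<in> {i1, i2, i3}" "a \<noteq> m" "c \<noteq> m" for m a c
  proof
    assume "before a m \<and> before m c"
    then obtain y where "y \<in> inner (Q m)" "y = x a \<or> E y (x a) \<or> y = x c \<or> E y (x c)"
      using path_meets_neighbour[of u "w m" "Q m" "x a" "x c"] paths[OF mac(1)]
        second(3)[OF mac(2)] second(3)[OF mac(3)] unfolding x_def before_def by blast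
    moreover have "separated E (Q m) (Q a)" "separated E (Q m) (Q c)" using sep mac by auto
    ultimately show False
      using second(2)[OF mac(2)] second(2)[OF mac(3)] unfolding separated_def by blast
  qed
  text \<open>\<dots> but among three pairwise disjoint intervals one lies between the other two.\<close>
  have "before i1 i2 \<or> before i2 i1" "before i1 i3 \<or> before i3 i1" "before i2 i3 \<or> before i3 i2"
    using disjoint distinct by auto
  moreover have "\<not> (before i1 i2 \<and> before i2 i3)" "\<not> (before i3 i2 \<and> before i2 i1)"
    "\<not> (before i2 i1 \<and> before i1 i3)" "\<not> (before i3 i1 \<and> before i1 i2)"
    "\<not> (before i1 i3 \<and> before i3 i2)" "\<not> (before i2 i3 \<and> before i3 i1)"
    using no_middle distinct by auto
  ultimately show False by blast
qed

end

lemma required_path_exists: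
  assumes "length (filter (\<lambda>P. ends P = T) Ps) = n" "0 < n"
  shows "\<exists>a < length Ps. ends (Ps ! a) = T"
proof -
  have "filter (\<lambda>P. ends P = T) Ps \<noteq> []" using assms by auto
  then obtain P where "P \<in> set Ps" "ends P = T" by (auto simp: filter_empty_conv)
  then show ?thesis by (auto simp: in_set_conv_nth)
qed

theorem mainTheorem6:
  fixes V :: "'a set" and E :: "'a \<Rightarrow> 'a \<Rightarrow> bool"
    and k :: nat and s t :: "nat \<Rightarrow> 'a" and r :: "nat \<Rightarrow> nat"
    and u :: 'a and i1 i2 i3 :: nat
  assumes "interval_graph V E"
    and "RIDP_instance V E k s t r"
    and "i1 < k" "i2 < k" "i3 < k"
    and "i1 \<noteq> i2" "i1 \<noteq> i3" "i2 \<noteq> i3"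
    and "\<forall>i \<in> {i1, i2, i3}.
           (s i = u \<and> t i \<noteq> u \<and> \<not> E u (t i)) \<or> (t i = u \<and> s i \<noteq> u \<and> \<not> E u (s i))"
  shows "\<not> RIDP_yes V E k s t r"
proof
  assume "RIDP_yes V E k s t r"
  then obtain Ps where mi: "mutually_induced V E Ps"
    and count: "\<forall>i<k. length (filter (\<lambda>P. ends P = {s i, t i}) Ps) = r i"
    unfolding RIDP_yes_def by blast
  obtain lo hi where model: "interval_model V E lo hi" using interval_graph_model[OF assms(1)] .
  have g: "graph V E" using model interval_model.graph by blast
  have positive: "\<forall>i<k. 0 < r i" and pairs_differ: "\<forall>i<k. \<forall>j<k. i \<noteq> j \<longrightarrow> {s i, t i} \<noteq> {s j, t j}"
    using assms(2) unfolding RIDP_instance_def by auto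
  define w where "w i = (if s i = u then t i else s i)" for i
  have partner: "{s i, t i} = {u, w i} \<and> u \<noteq> w i \<and> \<not> E u (w i)" if "i \<in> {i1, i2, i3}" for i
    using assms(9) that unfolding w_def by auto
  have "\<forall>i\<in>{i1, i2, i3}. \<exists>a < length Ps. ends (Ps ! a) = {s i, t i}"
    using required_path_exists count positive assms(3-5) by blast
  then obtain a where a: "\<And>i. i \<in> {i1, i2, i3} \<Longrightarrow> a i < length Ps \<and> ends (Ps ! a i) = {s i, t i}"
    by metis
  show False
  proof (rule interval_model.no_three_separated_paths[OF model, of i1 i2 i3 u w "\<lambda>i. orient u (Ps ! a i)"])
    show "path_between V E u (w i) (orient u (Ps ! a i)) \<and> u \<noteq> w i \<and> \<not> E u (w i)"
      if "i \<in> {i1, i2, i3}" for i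
      using member_path_between[OF g mi] a[OF that] partner[OF that] by auto
    show "separated E (orient u (Ps ! a i)) (orient u (Ps ! a j))"
      if ij: "i \<in> {i1, i2, i3}" "j \<in> {i1, i2, i3}" "i \<noteq> j" for i j
    proof -
      have "a i \<noteq> a j" using a[OF ij(1)] a[OF ij(2)] pairs_differ ij assms(3-5) by auto
      then show ?thesis using members_separated[OF mi] a ij by blast
    qed
  qed (use assms(6-8) in auto)
qed

end
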